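(* Let $G$ be a finite, simple, connected graph of order $n\ge 4$, and let $u,w_1,w_2\in V(G)$ with $\deg(u)=n-3$ and $V(G)=N[u]\cup\{w_1,w_2\}$. Then $\{u\}$ is a power dominating set of $G$ if and only if $w_1$ and $w_2$ are not twins.
   Context: Two vertices $x,y$ are twins if $N(x)=N(y)$ or $N[x]=N[y]$. For $U\subseteq V(G)$, $cl(U)$ is obtained by coloring $U$ black and repeatedly applying: if a black vertex has exactly one white neighbor, that neighbor becomes black. $S$ is a power dominating set if $cl(N[S])=V(G)$. *)

theory Defs
  imports Main
begin

definition simple_graph :: "'a set \<Rightarrow> ('a \<Rightarrow> 'a \<Rightarrow> bool) \<Rightarrow> bool" where
  "simple_graph V E \<longleftrightarrow> finite V \<and> (\<forall>x y. E x y \<longrightarrow> x \<in> V \<and> y \<in> V)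
     \<and> (\<forall>x y. E x y \<longrightarrow> E y x) \<and> (\<forall>x. \<not> E x x)"

definition connected_graph :: "'a set \<Rightarrow> ('a \<Rightarrow> 'a \<Rightarrow> bool) \<Rightarrow> bool" where
  "connected_graph V E \<longleftrightarrow> (\<forall>x\<in>V. \<forall>y\<in>V. E\<^sup>*\<^sup>* x y)"

definition nbhd :: "'a set \<Rightarrow> ('a \<Rightarrow> 'a \<Rightarrow> bool) \<Rightarrow> 'a \<Rightarrow> 'a set" where
  "nbhd V E x = {y \<in> V. E x y}"

definition cnbhd :: "'a set \<Rightarrow> ('a \<Rightarrow> 'a \<Rightarrow> bool) \<Rightarrow> 'a \<Rightarrow> 'a set" where
  "cnbhd V E x = insert x (nbhd V E x)"

definition deg :: "'a set \<Rightarrow> ('a \<Rightarrow> 'a \<Rightarrow> bool) \<Rightarrow> 'a \<Rightarrow> nat" where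
  "deg V E x = card (nbhd V E x)"

definition cnbhd_set :: "'a set \<Rightarrow> ('a \<Rightarrow> 'a \<Rightarrow> bool) \<Rightarrow> 'a set \<Rightarrow> 'a set" where
  "cnbhd_set V E S = (\<Union>s\<in>S. cnbhd V E s)"

definition twins :: "'a set \<Rightarrow> ('a \<Rightarrow> 'a \<Rightarrow> bool) \<Rightarrow> 'a \<Rightarrow> 'a \<Rightarrow> bool" where
  "twins V E x y \<longleftrightarrow> nbhd V E x = nbhd V E y \<or> cnbhd V E x = cnbhd V E y"

text \<open>One propagation (colour change) step: a black vertex with exactly one white
  neighbour turns that neighbour black.\<close>
definition force_step :: "'a set \<Rightarrow> ('a \<Rightarrow> 'a \<Rightarrow> bool) \<Rightarrow> 'a set \<Rightarrow> 'a set \<Rightarrow> bool" where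
  "force_step V E B B' \<longleftrightarrow> (\<exists>v\<in>B. \<exists>w. nbhd V E v - B = {w} \<and> B' = insert w B)"

definition cl :: "'a set \<Rightarrow> ('a \<Rightarrow> 'a \<Rightarrow> bool) \<Rightarrow> 'a set \<Rightarrow> 'a set" where
  "cl V E U = \<Union>{B. (force_step V E)\<^sup>*\<^sup>* U B}"

definition power_dominating :: "'a set \<Rightarrow> ('a \<Rightarrow> 'a \<Rightarrow> bool) \<Rightarrow> 'a set \<Rightarrow> bool" where
  "power_dominating V E S \<longleftrightarrow> S \<subseteq> V \<and> cl V E (cnbhd_set V E S) = V"

end

theory Submission
  imports Defs
begin

text \<open>The degree condition forces w1 and w2 to be two distinct vertices outside N[u], so
  propagation from N[u] is decided within two steps. If w1 and w2 are twins, every vertex of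
  N[u] is adjacent to both or to neither of them, and no vertex can ever force. Otherwise some
  v in N[u] is adjacent to exactly one of them, say w1; v forces w1, and then any neighbour of
  w2, which exists by connectivity, forces the last white vertex w2.\<close>

lemma simple_graph_edge_in_V:
  assumes "simple_graph V E" "E x y"
  shows "x \<in> V" "y \<in> V"
  using assms unfolding simple_graph_def by blast+

lemma simple_graph_edge_sym:
  assumes "simple_graph V E" "E x y"
  shows "E y x"
  using assms unfolding simple_graph_def by blast

lemma simple_graph_irrefl:
  assumes "simple_graph V E"
  shows "\<not> E x x"
  using assms unfolding simple_graph_def by blast

lemma card_cnbhd:
  assumes "simple_graph V E"
  shows "card (cnbhd V E u) = deg V E u + 1"
proof -
  have "finite (nbhd V E u)"
    using assms unfolding simple_graph_def nbhd_def by simp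
  moreover have "u \<notin> nbhd V E u"
    using simple_graph_irrefl[OF assms] unfolding nbhd_def by blast
  ultimately show ?thesis
    unfolding cnbhd_def deg_def by simp
qed

lemma connected_graph_has_neighbour:
  assumes "connected_graph V E" "x \<in> V" "y \<in> V" "x \<noteq> y"
  obtains z where "E z y"
proof -
  have "E\<^sup>*\<^sup>* x y"
    using assms unfolding connected_graph_def by blast
  then have "\<exists>z. E z y"
    using \<open>x \<noteq> y\<close> by (induction rule: rtranclp_induct) auto
  then show ?thesis
    using that by blast
qed

lemma twins_iff_same_neighbours_outside:
  assumes "simple_graph V E" "x \<in> V" "y \<in> V" "x \<noteq> y"
  shows "twins V E x y \<longleftrightarrow> (\<forall>v \<in> V - {x, y}. E v x \<longleftrightarrow> E v y)"
proof
  assume "twins V E x y"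
  then show "\<forall>v \<in> V - {x, y}. E v x \<longleftrightarrow> E v y"
    using simple_graph_edge_sym[OF assms(1)]
    unfolding twins_def cnbhd_def nbhd_def by blast
next
  assume same: "\<forall>v \<in> V - {x, y}. E v x \<longleftrightarrow> E v y"
  have sym: "E a b \<longleftrightarrow> E b a" for a b
    using simple_graph_edge_sym[OF assms(1)] by blast
  show "twins V E x y"
  proof (cases "E x y")
    case True
    then have "cnbhd V E x = cnbhd V E y"
      using same sym assms(2,3) unfolding cnbhd_def nbhd_def by blast
    then show ?thesis unfolding twins_def ..
  next
    case False
    then have "nbhd V E x = nbhd V E y"
      using same sym simple_graph_irrefl[OF assms(1)] unfolding nbhd_def by blast
    then show ?thesis unfolding twins_def ..
  qed
qed

lemma two_outside_of_card_le:
  assumes "finite V" "V = C \<union> {a, b}" "card C + 2 \<le> card V"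
  shows "a \<notin> C \<and> b \<notin> C \<and> a \<noteq> b"
proof (rule ccontr)
  assume "\<not> ?thesis"
  then obtain z where "V \<subseteq> insert z C"
    using assms(2) by blast
  moreover have "finite (insert z C)"
    using assms(1,2) by simp
  ultimately have "card V \<le> card (insert z C)"
    by (rule card_mono[rotated])
  also have "\<dots> \<le> card C + 1"
    using \<open>finite (insert z C)\<close> by (simp add: card_insert_if)
  finally have "card V \<le> card C + 1" .
  then show False
    using assms(3) by linarith
qed

lemma force_step_reachable_subset:
  assumes "(force_step V E)\<^sup>*\<^sup>* U B" "U \<subseteq> V"
  shows "B \<subseteq> V"
  using assms
proof (induction rule: rtranclp_induct)
  case base
  then show ?case by simp
next
  case (step B B')
  then show ?case
    unfolding force_step_def nbhd_def by blast
qed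

lemma cl_subset:
  assumes "U \<subseteq> V"
  shows "cl V E U \<subseteq> V"
  using force_step_reachable_subset assms unfolding cl_def by blast

lemma reachable_subset_cl:
  assumes "(force_step V E)\<^sup>*\<^sup>* U B"
  shows "B \<subseteq> cl V E U"
  using assms unfolding cl_def by blast

lemma cl_eq_self_if_no_force_step:
  assumes "\<And>B. \<not> force_step V E U B"
  shows "cl V E U = U"
proof -
  have "B = U" if "(force_step V E)\<^sup>*\<^sup>* U B" for B
    using that by (cases rule: converse_rtranclpE) (auto simp: assms)
  then show ?thesis
    unfolding cl_def by auto
qed

lemma force_step_last_white:
  assumes "simple_graph V E" "E x b"
  shows "force_step V E (V - {b}) V"
proof -
  have "x \<in> V - {b}" "b \<in> V"
    using assms simple_graph_edge_in_V simple_graph_irrefl by fastforce+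
  moreover have "nbhd V E x - (V - {b}) = {b}"
    using \<open>b \<in> V\<close> assms(2) unfolding nbhd_def by blast
  moreover have "V = insert b (V - {b})"
    using \<open>b \<in> V\<close> by blast
  ultimately show ?thesis
    unfolding force_step_def by metis
qed

lemma cl_eq_self_if_same_neighbours:
  assumes "V = C \<union> {a, b}" "a \<notin> C" "b \<notin> C" "a \<noteq> b"
    and same: "\<forall>v \<in> C. E v a \<longleftrightarrow> E v b"
  shows "cl V E C = C"
proof (rule cl_eq_self_if_no_force_step)
  fix B
  show "\<not> force_step V E C B"
  proof
    assume "force_step V E C B"
    then obtain v w where "v \<in> C" and white: "nbhd V E v - C = {w}"
      unfolding force_step_def by blast
    then have "w = a \<or> w = b" "E v w"
      using assms(1) unfolding nbhd_def by blast+
    then have "a \<in> nbhd V E v - C" "b \<in> nbhd V E v - C"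
      using same \<open>v \<in> C\<close> assms(1-3) unfolding nbhd_def by blast+
    with white \<open>a \<noteq> b\<close> show False
      by (metis singletonD)
  qed
qed

lemma force_steps_to_V_if_distinguishing:
  assumes "simple_graph V E" "connected_graph V E"
    and V: "V = C \<union> {a, b}" "a \<notin> C" "b \<notin> C" "a \<noteq> b"
    and v: "v \<in> C" "E v a" "\<not> E v b"
  shows "(force_step V E)\<^sup>*\<^sup>* C V"
proof -
  have "nbhd V E v - C = {a}"
    using V v unfolding nbhd_def by auto
  then have "force_step V E C (insert a C)"
    unfolding force_step_def using v(1) by blast
  moreover have "insert a C = V - {b}"
    using V by blast
  moreover obtain x where "E x b"
    using connected_graph_has_neighbour[OF assms(2), of a b] V by blast
  then have "force_step V E (V - {b}) V"
    using force_step_last_white[OF assms(1)] by blast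
  ultimately show ?thesis
    by (metis rtranclp.rtrancl_refl rtranclp.rtrancl_into_rtrancl)
qed

lemma cl_eq_V_iff_distinguishing:
  assumes "simple_graph V E" "connected_graph V E"
    and V: "V = C \<union> {a, b}" "a \<notin> C" "b \<notin> C" "a \<noteq> b"
  shows "cl V E C = V \<longleftrightarrow> (\<exists>v \<in> C. E v a \<noteq> E v b)"
proof
  assume "cl V E C = V"
  then show "\<exists>v \<in> C. E v a \<noteq> E v b"
    using cl_eq_self_if_same_neighbours[OF V] V by blast
next
  assume "\<exists>v \<in> C. E v a \<noteq> E v b"
  then obtain v where "v \<in> C" "E v a \<noteq> E v b"
    by blast
  moreover have "V = C \<union> {b, a}"
    using V(1) by blast
  ultimately have "(force_step V E)\<^sup>*\<^sup>* C V"
    using force_steps_to_V_if_distinguishing[OF assms(1,2)] V by (metis (full_types))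
  then have "V \<subseteq> cl V E C"
    by (rule reachable_subset_cl)
  moreover have "cl V E C \<subseteq> V"
    using V(1) by (intro cl_subset) blast
  ultimately show "cl V E C = V"
    by blast
qed

theorem mainTheorem6:
  fixes V :: "'a set" and E :: "'a \<Rightarrow> 'a \<Rightarrow> bool" and u w1 w2 :: 'a
  assumes "simple_graph V E"
    and "connected_graph V E"
    and "card V \<ge> 4"
    and "u \<in> V" and "w1 \<in> V" and "w2 \<in> V"
    and "deg V E u = card V - 3"
    and "V = cnbhd V E u \<union> {w1, w2}"
  shows "power_dominating V E {u} \<longleftrightarrow> \<not> twins V E w1 w2"
proof -
  define C where "C = cnbhd V E u"
  have V: "V = C \<union> {w1, w2}"
    using assms(8) unfolding C_def .
  have "card C + 2 \<le> card V"
    using card_cnbhd[OF assms(1)] assms(3,7) unfolding C_def by simp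
  then have outside: "w1 \<notin> C" "w2 \<notin> C" "w1 \<noteq> w2"
    using two_outside_of_card_le[OF _ V] assms(1) unfolding simple_graph_def by blast+
  have "power_dominating V E {u} \<longleftrightarrow> cl V E C = V"
    unfolding power_dominating_def cnbhd_set_def C_def using assms(4) by simp
  also have "\<dots> \<longleftrightarrow> (\<exists>v \<in> C. E v w1 \<noteq> E v w2)"
    using cl_eq_V_iff_distinguishing[OF assms(1,2) V outside] .
  also have "\<dots> \<longleftrightarrow> \<not> twins V E w1 w2"
    using twins_iff_same_neighbours_outside[OF assms(1,5,6) outside(3)] V outside by auto
  finally show ?thesis .
qed

end
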